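(* Let $d\ge 3$ and $0\le j\le \left\lfloor \frac{3(d-1)}{2}\right\rfloor$. The $S_3$-invariant elements of $\operatorname{Ker}(E)\cap A(d)_j$ are exactly the elements $P=\sum_{\lambda\in\mathscr{P}_{3,d-1}(j)}\alpha_\lambda[x^\lambda]$ ($\alpha_\lambda\in\Bbbk$) with $E(P)=0$, and the multiplicity of the trivial representation in $\operatorname{Ker}(E)\cap A(d)_j$ is $$\operatorname{triv}(d,j)=p_{3,d-1}(j)-p_{3,d-1}(j-1).$$
   Context: $\Bbbk$ is an algebraically closed field of characteristic $0$. For an integer $d\ge 1$, $A(d)=\Bbbk[x_1,x_2,x_3]/(x_1^d,x_2^d,x_3^d)=\bigoplus_j A(d)_j$ with its standard grading ($A(d)_j=0$ for $j<0$). The symmetric group $S_3$ acts on $A(d)$ by permuting the variables. The linear map $E:A(d)_{j+1}\to A(d)_j$ is defined on the monomial basis by $E(x_1^{a_1}x_2^{a_2}x_3^{a_3})=\sum_{k=1}^{3} a_k(d-a_k)\,x_1^{a_1}\cdots x_k^{a_k-1}\cdots x_3^{a_3}$; it commutes with the $S_3$-action, so $\operatorname{Ker}(E)\cap A(d)_j$ is an $S_3$-module. $\operatorname{triv}(d,j)$ denotes the multiplicity of the trivial representation in $\operatorname{Ker}(E)\cap A(d)_j$. For integers $l\ge0$, $n$: $\mathscr{P}_{3,l}(n)$ is the set of integer triples $(a,b,c)$ with $l\ge a\ge b\ge c\ge 0$, $a+b+c=n$, and $p_{3,l}(n)=|\mathscr{P}_{3,l}(n)|$ ($=0$ for $n<0$).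 For $\lambda=(a,b,c)$, $[x^\lambda]$ denotes the sum of the distinct monomials in the $S_3$-orbit of $x_1^ax_2^bx_3^c$. *)

theory Defs
  imports "HOL-Computational_Algebra.Polynomial" "HOL-Combinatorics.Permutations" "HOL-Library.Function_Algebras"
begin

text \<open>Elements of A(d) = k[x_0,x_1,x_2]/(x_0^d,x_1^d,x_2^d) are represented by their
coefficient functions on exponent vectors e :: nat => nat (only e 0, e 1, e 2 matter;
the basis monomials are those with e i < d for i<3 and e i = 0 for i >= 3).\<close>

definition mons :: "nat \<Rightarrow> nat \<Rightarrow> (nat \<Rightarrow> nat) set" where
  "mons d j = {e. (\<forall>i\<ge>3. e i = 0) \<and> (\<forall>i<3. e i < d) \<and> e 0 + e 1 + e 2 = j}"

definition Adeg :: "nat \<Rightarrow> nat \<Rightarrow> ((nat \<Rightarrow> nat) \<Rightarrow> 'k::field) set" where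
  "Adeg d j = {f. \<forall>e. e \<notin> mons d j \<longrightarrow> f e = 0}"

text \<open>The operator E: E(x^a) = sum_k a_k (d - a_k) x^(a - e_k); coefficient form.\<close>
definition Eop :: "nat \<Rightarrow> ((nat \<Rightarrow> nat) \<Rightarrow> 'k::field) \<Rightarrow> ((nat \<Rightarrow> nat) \<Rightarrow> 'k)" where
  "Eop d f = (\<lambda>e. \<Sum>k<3. of_nat ((e k + 1) * (d - (e k + 1))) * f (e(k := e k + 1)))"

text \<open>S_3 action by permuting variables: sigma sends x_i to x_(sigma i).\<close>
definition perm_act :: "(nat \<Rightarrow> nat) \<Rightarrow> ((nat \<Rightarrow> nat) \<Rightarrow> 'k::field) \<Rightarrow> ((nat \<Rightarrow> nat) \<Rightarrow> 'k)" where
  "perm_act \<sigma> f = (\<lambda>e. f (e \<circ> \<sigma>))"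

definition S3_invariant :: "((nat \<Rightarrow> nat) \<Rightarrow> 'k::field) \<Rightarrow> bool" where
  "S3_invariant f \<longleftrightarrow> (\<forall>\<sigma>. \<sigma> permutes {0..<3} \<longrightarrow> perm_act \<sigma> f = f)"

definition expvec :: "nat \<times> nat \<times> nat \<Rightarrow> (nat \<Rightarrow> nat)" where
  "expvec lam = (case lam of (a, b, c) \<Rightarrow>
      (\<lambda>i. if i = 0 then a else if i = 1 then b else if i = 2 then c else 0))"

text \<open>[x^lambda]: the sum of the distinct monomials in the S_3-orbit of x^lambda.\<close>
definition orbsum :: "nat \<times> nat \<times> nat \<Rightarrow> ((nat \<Rightarrow> nat) \<Rightarrow> 'k::field)" where
  "orbsum lam = (\<lambda>e. if e \<in> {expvec lam \<circ> \<sigma> | \<sigma>. \<sigma> permutes {0..<3}} then 1 else 0)"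

definition Part3 :: "nat \<Rightarrow> int \<Rightarrow> (nat \<times> nat \<times> nat) set" where
  "Part3 l n = {(a, b, c). l \<ge> a \<and> a \<ge> b \<and> b \<ge> c \<and> int (a + b + c) = n}"

definition p3 :: "nat \<Rightarrow> int \<Rightarrow> nat" where
  "p3 l n = card (Part3 l n)"

definition fscale :: "'k::field \<Rightarrow> ('a \<Rightarrow> 'k) \<Rightarrow> ('a \<Rightarrow> 'k)" where
  "fscale c f = (\<lambda>x. c * f x)"

text \<open>Multiplicity of the trivial representation in Ker(E) \<inter> A(d)_j, i.e. the dimension
of the subspace of S_3-invariant elements (char 0).\<close>
definition triv :: "'k::field itself \<Rightarrow> nat \<Rightarrow> nat \<Rightarrow> nat" where
  "triv _ d j = vector_space.dim (fscale :: 'k \<Rightarrow> _)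
      {f :: (nat \<Rightarrow> nat) \<Rightarrow> 'k. f \<in> Adeg d j \<and> Eop d f = (\<lambda>_. 0) \<and> S3_invariant f}"

end

theory Submission
  imports Defs
begin

(* The S_3-invariants of A(d)_j are spanned by the orbit sums [x^lambda], lambda in P_{3,d-1}(j),
   which are linearly independent; so they form a space of dimension p_{3,d-1}(j).
   With the raising operator F and the weight H = 3(d-1) - 2n on A(d)_n, E satisfies [E, F] = H,
   and E, F commute with S_3. Below the middle degree this forces EF to be injective, so E maps
   the invariants of degree j onto those of degree j - 1, and rank-nullity gives
   triv(d,j) = p_{3,d-1}(j) - p_{3,d-1}(j-1). *)

context vector_space begin

lemma span_disjoint_subsets_eq_0:
  assumes "independent C" "A \<subseteq> C" "B \<subseteq> C" "A \<inter> B = {}" "x \<in> span A" "x \<in> span B"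
  shows "x = 0"
proof -
  have rA: "representation C x = representation A x"
    by (rule representation_extend[OF assms(1) assms(5,2)])
  have rB: "representation C x = representation B x"
    by (rule representation_extend[OF assms(1) assms(6,3)])
  have "representation C x b = 0" for b
    using rA rB assms(4) representation_ne_zero[of A x b] representation_ne_zero[of B x b] by auto
  moreover have "x \<in> span C"
    using assms(2,5) span_mono by blast
  ultimately show ?thesis
    using sum_nonzero_representation_eq[OF assms(1), of x] by simp
qed

lemma independent_card_le_dim_of_finite_span:
  assumes "independent I" "I \<subseteq> V" "V \<subseteq> span S" "finite S"
  shows "card I \<le> dim V"
proof -
  obtain B where B: "B \<subseteq> V" "independent B" "V \<subseteq> span B" "card B = dim V"
    using basis_exists by blast
  have "finite B"
    using independent_span_bound[OF assms(4) B(2)] B(1) assms(3) by (meson subset_trans)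
  moreover have "I \<subseteq> span B"
    using assms(2) B(3) by blast
  ultimately show ?thesis
    using independent_span_bound[OF _ assms(1)] B(4) by metis
qed

end

context vector_space_pair begin

lemma dim_image_inj_on_span:
  assumes "Vector_Spaces.linear s1 s2 f" "vs1.independent W" "inj_on f (vs1.span W)"
  shows "vs2.dim (f ` vs1.span W) = card W"
proof -
  have "card (f ` W) = card W"
    using assms(3) vs1.span_superset by (metis card_image inj_on_subset)
  moreover have "vs2.independent (f ` W)"
    using assms by (rule linear_independent_injective_image)
  ultimately show ?thesis
    using linear_span_image[OF assms(1)] vs2.dim_span_eq_card_independent by metis
qed

lemma image_span_Un_kernel:
  assumes f: "Vector_Spaces.linear s1 s2 f" and "\<And>b. b \<in> B \<Longrightarrow> f b = 0"
  shows "f ` vs1.span (B \<union> W) = f ` vs1.span W"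
proof
  show "f ` vs1.span (B \<union> W) \<subseteq> f ` vs1.span W"
  proof
    fix y assume "y \<in> f ` vs1.span (B \<union> W)"
    then obtain b w where bw: "b \<in> vs1.span B" "w \<in> vs1.span W" "y = f (b + w)"
      unfolding vs1.span_Un by blast
    have "f b = 0"
      using linear_eq_0_on_span[OF f _ bw(1)] assms(2) by blast
    then show "y \<in> f ` vs1.span W"
      using bw by (simp add: linear_add[OF f])
  qed
  show "f ` vs1.span W \<subseteq> f ` vs1.span (B \<union> W)"
    by (intro image_mono vs1.span_mono) simp
qed

(* Only the source subspace is finitely spanned: the ambient function spaces are infinite-dimensional,
   so the dimension formulas of finite_dimensional_vector_space do not apply. *)
lemma rank_nullity_span:
  assumes f: "Vector_Spaces.linear s1 s2 f" and "finite M"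
  shows "vs1.dim (vs1.span M) = vs1.dim {x \<in> vs1.span M. f x = 0} + vs2.dim (f ` vs1.span M)"
proof -
  let ?K = "{x \<in> vs1.span M. f x = 0}"
  obtain B where B: "B \<subseteq> ?K" "vs1.independent B" "?K \<subseteq> vs1.span B" "card B = vs1.dim ?K"
    using vs1.basis_exists by blast
  obtain C where C: "B \<subseteq> C" "C \<subseteq> vs1.span M" "vs1.independent C" "vs1.span M \<subseteq> vs1.span C"
    using vs1.maximal_independent_subset_extend[of B "vs1.span M"] B(1,2) by blast
  have span_C: "vs1.span C = vs1.span M"
    using C(2,4) vs1.span_minimal[OF C(2) vs1.subspace_span] by blast
  have "finite C"
    using vs1.independent_span_bound[OF \<open>finite M\<close> C(3) C(2)] by blast
  define W where "W = C - B"
  have C_eq: "C = B \<union> W"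
    using C(1) by (auto simp: W_def)
  have span_W: "vs1.span W \<subseteq> vs1.span M"
    using span_C vs1.span_mono[of W C] by (auto simp: W_def)
  have inj: "inj_on f (vs1.span W)"
    unfolding linear_inj_on_iff_eq_0[OF f vs1.subspace_span]
  proof (intro ballI impI)
    fix x assume x: "x \<in> vs1.span W" "f x = 0"
    then have "x \<in> vs1.span B"
      using span_W B(3) by blast
    then show "x = 0"
      using x(1) C(1,3) by (intro vs1.span_disjoint_subsets_eq_0[of C B W]) (auto simp: W_def)
  qed
  have image_eq: "f ` vs1.span M = f ` vs1.span W"
    using image_span_Un_kernel[OF f, of B W] B(1) span_C C_eq by auto
  have "vs1.dim (vs1.span M) = card C"
    using span_C C(3) vs1.dim_span_eq_card_independent by metis
  also have "\<dots> = card B + card W"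
    using \<open>finite C\<close> C(1) card_Diff_subset[of B C] card_mono[of C B] finite_subset[of B C]
    by (simp add: W_def)
  finally show ?thesis
    using B(4) image_eq dim_image_inj_on_span[OF f vs1.independent_mono[OF C(3)] inj]
    by (simp add: W_def)
qed

end

global_interpretation fsv: vector_space "fscale :: 'k::field \<Rightarrow> ('a \<Rightarrow> 'k) \<Rightarrow> ('a \<Rightarrow> 'k)"
  by unfold_locales (auto simp: fscale_def fun_eq_iff algebra_simps)

global_interpretation fsp: vector_space_pair
  "fscale :: 'k::field \<Rightarrow> ('a \<Rightarrow> 'k) \<Rightarrow> ('a \<Rightarrow> 'k)" "fscale :: 'k \<Rightarrow> ('b \<Rightarrow> 'k) \<Rightarrow> ('b \<Rightarrow> 'k)"
  ..

lemma sum_apply: "sum f A x = (\<Sum>a\<in>A. f a x)"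
  by (induction A rule: infinite_finite_induct) auto

lemma sum_fscale_apply: "sum (\<lambda>a. fscale (c a) (f a)) A x = (\<Sum>a\<in>A. c a * f a x)"
  by (simp add: sum_apply fscale_def)

lemma fscale_eq_0_iff: "fscale c f = 0 \<longleftrightarrow> c = 0 \<or> f = (0 :: 'a \<Rightarrow> 'k::field)"
  by (auto simp: fscale_def fun_eq_iff)

lemma fsv_span_image_eq_range_sum:
  assumes "finite P" "inj_on g P"
  shows "fsv.span (g ` P) = range (\<lambda>\<alpha> x. \<Sum>p\<in>P. \<alpha> p * (g p x :: 'k::field))"
proof -
  have sum_eq: "(\<Sum>v\<in>g ` P. fscale (u v) v) = (\<lambda>x. \<Sum>p\<in>P. u (g p) * g p x)" for u
    using assms(2) by (auto simp: sum.reindex sum_fscale_apply)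
  have "(\<lambda>x. \<Sum>p\<in>P. \<alpha> p * g p x) \<in> range (\<lambda>u x. \<Sum>p\<in>P. u (g p) * g p x)" for \<alpha>
  proof
    show "(\<lambda>x. \<Sum>p\<in>P. \<alpha> p * g p x) = (\<lambda>x. \<Sum>p\<in>P. (\<alpha> \<circ> the_inv_into P g) (g p) * g p x)"
      using assms(2) by (auto simp: the_inv_into_f_f intro!: sum.cong)
  qed simp
  then show ?thesis
    using assms(1) by (auto simp: fsv.span_finite sum_eq)
qed

definition orbit :: "nat \<times> nat \<times> nat \<Rightarrow> (nat \<Rightarrow> nat) set" where
  "orbit lam = {expvec lam \<circ> \<sigma> | \<sigma>. \<sigma> permutes {0..<3}}"

lemma orbsum_eq: "orbsum lam e = (if e \<in> orbit lam then 1 else 0)"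
  by (simp add: orbsum_def orbit_def)

lemma map_upt_3: "map e [0..<3] = [e 0, e 1, e 2]"
  by (simp add: eval_nat_numeral upt_rec)

lemma expvec_eq_nth: "i < 3 \<Longrightarrow> expvec (a, b, c) i = [a, b, c] ! i"
  by (auto simp: expvec_def eval_nat_numeral less_Suc_eq)

lemma expvec_ge_3: "3 \<le> i \<Longrightarrow> expvec lam i = 0"
  by (auto simp: expvec_def split: prod.split)

lemma map_comp_permutes:
  assumes "\<sigma> permutes {..<n}"
  shows "map (e \<circ> \<sigma>) [0..<n] = permute_list \<sigma> (map e [0..<n])"
  using permutes_in_image[OF assms] by (simp add: permute_list_def)

lemma mem_orbit_iff:
  "e \<in> orbit (a, b, c) \<longleftrightarrow> (\<forall>i\<ge>3. e i = 0) \<and> mset [e 0, e 1, e 2] = mset [a, b, c]"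
proof
  assume "e \<in> orbit (a, b, c)"
  then obtain \<sigma> where \<sigma>: "\<sigma> permutes {..<3}" "e = expvec (a, b, c) \<circ> \<sigma>"
    by (auto simp: orbit_def atLeast0LessThan)
  have "mset (map e [0..<3]) = mset (permute_list \<sigma> (map (expvec (a, b, c)) [0..<3]))"
    by (simp add: \<sigma>(2) map_comp_permutes[OF \<sigma>(1)])
  also have "\<dots> = mset (map (expvec (a, b, c)) [0..<3])"
    by (rule mset_permute_list) (use \<sigma>(1) in simp)
  also have "\<dots> = mset [a, b, c]"
    by (simp add: map_upt_3 expvec_def)
  moreover have "\<forall>i\<ge>3. e i = 0"
    using \<sigma> permutes_not_in[OF \<sigma>(1)] by (simp add: expvec_ge_3)
  ultimately show "(\<forall>i\<ge>3. e i = 0) \<and> mset [e 0, e 1, e 2] = mset [a, b, c]"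
    by (simp add: map_upt_3)
next
  assume e: "(\<forall>i\<ge>3. e i = 0) \<and> mset [e 0, e 1, e 2] = mset [a, b, c]"
  then have "mset (map e [0..<3]) = mset [a, b, c]"
    by (simp add: map_upt_3)
  then obtain p where p_len: "p permutes {..<length [a, b, c]}"
    and "permute_list p [a, b, c] = map e [0..<3]"
    by (rule mset_eq_permutation)
  then have p: "p permutes {..<3}" "permute_list p [a, b, c] = map e [0..<3]"
    by (simp_all add: numeral_3_eq_3)
  have "e i = expvec (a, b, c) (p i)" for i
  proof (cases "i < 3")
    case True
    then have "e i = permute_list p [a, b, c] ! i"
      using p(2) by simp
    also have "\<dots> = expvec (a, b, c) (p i)"
      using True permute_list_nth[OF p_len] permutes_in_image[OF p(1)] by (simp add: expvec_eq_nth)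
    finally show ?thesis .
  qed (use e permutes_not_in[OF p(1)] in \<open>simp add: expvec_ge_3\<close>)
  then have "e = expvec (a, b, c) \<circ> p"
    by auto
  then show "e \<in> orbit (a, b, c)"
    using p(1) by (auto simp: orbit_def atLeast0LessThan)
qed

lemma orbit_comp_permutes:
  assumes "\<sigma> permutes {0..<3}"
  shows "e \<circ> \<sigma> \<in> orbit lam \<longleftrightarrow> e \<in> orbit lam"
proof -
  have "mset (map (e \<circ> \<sigma>) [0..<3]) = mset (map e [0..<3])"
    using assms by (simp add: map_comp_permutes atLeast0LessThan)
  moreover have "(e \<circ> \<sigma>) i = e i" if "3 \<le> i" for i
    using permutes_not_in[OF assms] that by simp
  ultimately show ?thesis
    by (cases lam) (auto simp: mem_orbit_iff map_upt_3)
qed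

lemma orbit_subset_mons:
  assumes "lam \<in> Part3 (d - 1) (int j)" "0 < d"
  shows "orbit lam \<subseteq> mons d j"
proof
  fix e assume "e \<in> orbit lam"
  obtain a b c where lam: "lam = (a, b, c)" "c \<le> b" "b \<le> a" "a < d" "a + b + c = j"
    using assms by (cases lam) (auto simp: Part3_def)
  with \<open>e \<in> orbit lam\<close> have e: "\<forall>i\<ge>3. e i = 0" "mset [e 0, e 1, e 2] = mset [a, b, c]"
    by (simp_all add: mem_orbit_iff)
  have "set [e 0, e 1, e 2] = {a, b, c}"
    using mset_eq_setD[OF e(2)] by simp
  moreover have "sum_list [e 0, e 1, e 2] = a + b + c"
    using arg_cong[OF e(2), of sum_mset] by (simp add: add.assoc)
  ultimately show "e \<in> mons d j"
    using e(1) lam by (auto simp: mons_def less_Suc_eq eval_nat_numeral)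
qed

lemma Part3_eq_if_mem_orbit:
  assumes "lam \<in> Part3 l n" "mu \<in> Part3 l' n'" "e \<in> orbit lam" "e \<in> orbit mu"
  shows "lam = mu"
proof -
  obtain a b c a' b' c' where lam: "lam = (a, b, c)" "sorted [c, b, a]"
    and mu: "mu = (a', b', c')" "sorted [c', b', a']"
    using assms(1,2) by (cases lam, cases mu) (auto simp: Part3_def)
  have "mset [a, b, c] = mset [a', b', c']"
    using assms(3,4) lam(1) mu(1) by (auto simp: mem_orbit_iff)
  then have "mset [c, b, a] = mset [c', b', a']"
    using mset_rev[of "[a, b, c]"] mset_rev[of "[a', b', c']"] by simp
  then have "[c, b, a] = [c', b', a']"
    using properties_for_sort lam(2) mu(2) by metis
  then show ?thesis
    using lam mu by simp
qed

lemma mons_mem_orbit: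
  assumes "e \<in> mons d j"
  shows "\<exists>lam\<in>Part3 (d - 1) (int j). e \<in> orbit lam"
proof -
  define xs where "xs = sort [e 0, e 1, e 2]"
  have "length xs = 3"
    by (simp add: xs_def)
  then obtain c b a where sort: "xs = [c, b, a]"
    by (auto simp: length_Suc_conv eval_nat_numeral)
  have sorted: "sorted [c, b, a]"
    by (metis sort xs_def sorted_sort)
  have "mset [c, b, a] = mset [e 0, e 1, e 2]"
    unfolding sort[symmetric] xs_def by (rule mset_sort)
  then have ms: "mset [e 0, e 1, e 2] = mset [a, b, c]"
    by (simp add: add_mset_commute)
  have "a \<in> {e 0, e 1, e 2}"
    using mset_eq_setD[OF ms] by simp
  then have "a < d"
    using assms by (auto simp: mons_def)
  moreover have "sum_list [e 0, e 1, e 2] = a + b + c"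
    using arg_cong[OF ms, of sum_mset] by (simp add: add.assoc)
  ultimately have "(a, b, c) \<in> Part3 (d - 1) (int j)" "e \<in> orbit (a, b, c)"
    using assms sorted ms by (auto simp: Part3_def mons_def mem_orbit_iff eval_nat_numeral less_Suc_eq)
  then show ?thesis
    by blast
qed

lemma expvec_mem_orbit: "expvec lam \<in> orbit lam"
proof -
  have "expvec lam = expvec lam \<circ> id" "id permutes {0..<3::nat}"
    by simp_all
  then show ?thesis
    unfolding orbit_def by blast
qed

lemma finite_Part3: "finite (Part3 l n)"
proof -
  have "Part3 l n \<subseteq> {0..l} \<times> {0..l} \<times> {0..l}"
    by (auto simp: Part3_def)
  then show ?thesis
    by (rule finite_subset) auto
qed

lemma Part3_neg: "n < 0 \<Longrightarrow> Part3 l n = {}"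
  by (auto simp: Part3_def)

lemma sum_orbsum_mem_orbit:
  assumes "mu \<in> Part3 l n" "e \<in> orbit mu"
  shows "(\<Sum>lam\<in>Part3 l n. \<alpha> lam * orbsum lam e) = (\<alpha> mu :: 'k::field)"
proof -
  have "(\<Sum>lam\<in>Part3 l n. \<alpha> lam * orbsum lam e) = (\<Sum>lam\<in>Part3 l n. if lam = mu then \<alpha> lam else 0)"
    using assms Part3_eq_if_mem_orbit by (intro sum.cong) (auto simp: orbsum_eq)
  then show ?thesis
    using assms(1) finite_Part3 by simp
qed

lemma sum_orbsum_not_mem_orbit:
  assumes "\<forall>lam\<in>Part3 l n. e \<notin> orbit lam"
  shows "(\<Sum>lam\<in>Part3 l n. \<alpha> lam * orbsum lam e) = (0 :: 'k::field)"
  using assms by (simp add: orbsum_eq)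

lemma inj_on_orbsum: "inj_on (orbsum :: _ \<Rightarrow> _ \<Rightarrow> 'k::field) (Part3 l n)"
proof
  fix lam mu assume "lam \<in> Part3 l n" "mu \<in> Part3 l n" "(orbsum lam :: _ \<Rightarrow> 'k) = orbsum mu"
  then have "(orbsum mu (expvec lam) :: 'k) = orbsum lam (expvec lam)"
    by simp
  then have "expvec lam \<in> orbit mu"
    using expvec_mem_orbit[of lam] by (auto simp: orbsum_eq split: if_splits)
  then show "lam = mu"
    using Part3_eq_if_mem_orbit \<open>lam \<in> Part3 l n\<close> \<open>mu \<in> Part3 l n\<close> expvec_mem_orbit by blast
qed

lemma independent_orbsum: "fsv.independent (orbsum ` Part3 l n :: ((nat \<Rightarrow> nat) \<Rightarrow> 'k::field) set)"
proof -
  have "u v = 0"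
    if zero: "(\<Sum>v\<in>orbsum ` Part3 l n. fscale (u v) v) = 0" and "v \<in> orbsum ` Part3 l n"
    for u and v :: "(nat \<Rightarrow> nat) \<Rightarrow> 'k"
  proof -
    obtain mu where mu: "mu \<in> Part3 l n" "v = orbsum mu"
      using \<open>v \<in> orbsum ` Part3 l n\<close> by blast
    have "0 = (\<Sum>lam\<in>Part3 l n. (u \<circ> orbsum) lam * orbsum lam (expvec mu))"
      using zero by (simp add: fun_eq_iff sum_fscale_apply sum.reindex[OF inj_on_orbsum])
    with mu show "u v = 0"
      by (simp add: sum_orbsum_mem_orbit[OF mu(1) expvec_mem_orbit])
  qed
  then show ?thesis
    using fsv.dependent_finite[OF finite_imageI[OF finite_Part3]] by blast
qed

lemma dim_span_orbsum: "fsv.dim (fsv.span (orbsum ` Part3 l n :: ((nat \<Rightarrow> nat) \<Rightarrow> 'k::field) set)) = p3 l n"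
  by (simp add: p3_def fsv.dim_eq_card_independent[OF independent_orbsum] card_image[OF inj_on_orbsum])

definition invariants :: "nat \<Rightarrow> nat \<Rightarrow> ((nat \<Rightarrow> nat) \<Rightarrow> 'k::field) set" where
  "invariants d j = {f \<in> Adeg d j. S3_invariant f}"

lemma S3_invariant_iff_orbsum_combination:
  assumes "0 < d" "P \<in> Adeg d j"
  shows "S3_invariant P \<longleftrightarrow> (\<exists>\<alpha>. P = (\<lambda>e. \<Sum>lam\<in>Part3 (d - 1) (int j). \<alpha> lam * orbsum lam e))"
proof
  assume inv: "S3_invariant P"
  have "P e = (\<Sum>lam\<in>Part3 (d - 1) (int j). P (expvec lam) * orbsum lam e)" for e
  proof (cases "e \<in> mons d j")
    case True
    then obtain mu where mu: "mu \<in> Part3 (d - 1) (int j)" "e \<in> orbit mu"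
      using mons_mem_orbit by blast
    then obtain \<sigma> where \<sigma>: "\<sigma> permutes {0..<3}" "e = expvec mu \<circ> \<sigma>"
      by (auto simp: orbit_def)
    then have "P e = perm_act \<sigma> P (expvec mu)"
      by (simp add: perm_act_def \<sigma>(2))
    also have "\<dots> = P (expvec mu)"
      using inv \<sigma>(1) by (simp add: S3_invariant_def)
    finally have "P e = P (expvec mu)" .
    then show ?thesis
      using sum_orbsum_mem_orbit[OF mu, of "\<lambda>lam. P (expvec lam)"] by simp
  next
    case False
    then have "\<forall>lam\<in>Part3 (d - 1) (int j). e \<notin> orbit lam"
      using assms(1) orbit_subset_mons by blast
    moreover have "P e = 0"
      using False assms(2) by (simp add: Adeg_def)
    ultimately show ?thesis
      by (simp add: sum_orbsum_not_mem_orbit)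
  qed
  then show "\<exists>\<alpha>. P = (\<lambda>e. \<Sum>lam\<in>Part3 (d - 1) (int j). \<alpha> lam * orbsum lam e)"
    by (intro exI[of _ "\<lambda>lam. P (expvec lam)"] ext)
next
  assume "\<exists>\<alpha>. P = (\<lambda>e. \<Sum>lam\<in>Part3 (d - 1) (int j). \<alpha> lam * orbsum lam e)"
  then show "S3_invariant P"
    by (auto simp: S3_invariant_def perm_act_def orbsum_eq orbit_comp_permutes)
qed

lemma invariants_eq_span_orbsum:
  assumes "0 < d"
  shows "invariants d j = fsv.span (orbsum ` Part3 (d - 1) (int j))"
proof -
  have "(\<lambda>e. \<Sum>lam\<in>Part3 (d - 1) (int j). \<alpha> lam * orbsum lam e) \<in> Adeg d j" for \<alpha> :: "_ \<Rightarrow> 'k::field"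
    unfolding Adeg_def
  proof (intro CollectI allI impI)
    fix e assume "e \<notin> mons d j"
    then have "\<forall>lam\<in>Part3 (d - 1) (int j). e \<notin> orbit lam"
      using assms orbit_subset_mons by blast
    then show "(\<Sum>lam\<in>Part3 (d - 1) (int j). \<alpha> lam * orbsum lam e) = 0"
      by (rule sum_orbsum_not_mem_orbit)
  qed
  then show ?thesis
    using S3_invariant_iff_orbsum_combination[OF assms]
    by (auto simp: invariants_def fsv_span_image_eq_range_sum[OF finite_Part3 inj_on_orbsum])
qed

(* The raising operator F(x^a) = sum_k x^(a + e_k) of A(d), in coefficient form. *)
definition Fop :: "nat \<Rightarrow> ((nat \<Rightarrow> nat) \<Rightarrow> 'k::field) \<Rightarrow> ((nat \<Rightarrow> nat) \<Rightarrow> 'k)" where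
  "Fop d f = (\<lambda>e. \<Sum>k<3. if 0 < e k \<and> e k < d then f (e(k := e k - 1)) else 0)"

lemma linear_Eop: "Vector_Spaces.linear fscale fscale (Eop d :: ((nat \<Rightarrow> nat) \<Rightarrow> 'k::field) \<Rightarrow> _)"
  by (auto simp: Vector_Spaces.linear_iff fsv.vector_space_axioms Eop_def fscale_def fun_eq_iff
      algebra_simps sum.distrib sum_distrib_left)

lemma linear_Fop: "Vector_Spaces.linear fscale fscale (Fop d :: ((nat \<Rightarrow> nat) \<Rightarrow> 'k::field) \<Rightarrow> _)"
  by (auto simp: Vector_Spaces.linear_iff fsv.vector_space_axioms Fop_def fscale_def fun_eq_iff
      sum.distrib[symmetric] sum_distrib_left intro!: sum.cong)

lemma mons_upd_Suc_iff:
  assumes "k < 3"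
  shows "e(k := Suc x) \<in> mons d (Suc m) \<longleftrightarrow> e(k := x) \<in> mons d m \<and> Suc x < d"
proof -
  have "k = 0 \<or> k = 1 \<or> k = 2"
    using assms by auto
  then show ?thesis
    by (elim disjE) (auto simp: mons_def)
qed

lemma Eop_Adeg:
  assumes "f \<in> Adeg d (Suc m)"
  shows "Eop d f \<in> Adeg d m"
  unfolding Adeg_def
proof (intro CollectI allI impI)
  fix e assume "e \<notin> mons d m"
  then have "f (e(k := Suc (e k))) = 0" if "k < 3" for k
    using assms mons_upd_Suc_iff[OF that, of e "e k" d m] by (simp add: Adeg_def)
  then show "Eop d f e = 0"
    by (simp add: Eop_def)
qed

lemma Eop_Adeg_0:
  assumes "f \<in> Adeg d 0"
  shows "Eop d f = 0"
proof
  fix e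
  have "e(k := Suc (e k)) \<notin> mons d 0" if "k < 3" for k
    using that by (auto simp: mons_def less_Suc_eq eval_nat_numeral)
  then show "Eop d f e = 0 e"
    using assms by (simp add: Eop_def Adeg_def)
qed

lemma Fop_Adeg:
  assumes "f \<in> Adeg d m"
  shows "Fop d f \<in> Adeg d (Suc m)"
  unfolding Adeg_def
proof (intro CollectI allI impI)
  fix e assume "e \<notin> mons d (Suc m)"
  then have "f (e(k := e k - 1)) = 0" if "k < 3" "0 < e k" "e k < d" for k
    using assms mons_upd_Suc_iff[OF that(1), of e "e k - 1" d m] that(2,3) by (simp add: Adeg_def)
  then show "Fop d f e = 0"
    unfolding Fop_def by (intro sum.neutral) auto
qed

lemma sum_upd_comp_permutes:
  assumes "\<sigma> permutes {..<n}"
  shows "(\<Sum>k<n. g ((e \<circ> \<sigma>) k) ((e \<circ> \<sigma>)(k := h ((e \<circ> \<sigma>) k))))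
       = (\<Sum>k<n. g (e k) (e(k := h (e k)) \<circ> \<sigma>))"
proof -
  have "(e \<circ> \<sigma>)(k := v) = e(\<sigma> k := v) \<circ> \<sigma>" for k v
    using permutes_inj[OF assms] by (auto simp: fun_eq_iff inj_eq)
  then show ?thesis
    using sum.permute[OF assms, of "\<lambda>k. g (e k) (e(k := h (e k)) \<circ> \<sigma>)"] by simp
qed

lemma Eop_perm_act:
  assumes "\<sigma> permutes {0..<3}"
  shows "Eop d (perm_act \<sigma> f) = perm_act \<sigma> (Eop d f)"
  using sum_upd_comp_permutes[of \<sigma> 3 "\<lambda>x e'. of_nat ((x + 1) * (d - (x + 1))) * f e'" _ "\<lambda>x. x + 1"] assms
  by (simp add: Eop_def perm_act_def fun_eq_iff atLeast0LessThan)

lemma Fop_perm_act: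
  assumes "\<sigma> permutes {0..<3}"
  shows "Fop d (perm_act \<sigma> f) = perm_act \<sigma> (Fop d f)"
  using sum_upd_comp_permutes[of \<sigma> 3 "\<lambda>x e'. if 0 < x \<and> x < d then f e' else 0" _ "\<lambda>x. x - 1"] assms
  by (simp add: Fop_def perm_act_def fun_eq_iff atLeast0LessThan)

lemma S3_invariant_Eop: "S3_invariant f \<Longrightarrow> S3_invariant (Eop d f)"
  unfolding S3_invariant_def by (metis Eop_perm_act)

lemma S3_invariant_Fop: "S3_invariant f \<Longrightarrow> S3_invariant (Fop d f)"
  unfolding S3_invariant_def by (metis Fop_perm_act)

lemma Eop_invariants: "f \<in> invariants d (Suc m) \<Longrightarrow> Eop d f \<in> invariants d m"
  by (simp add: invariants_def Eop_Adeg S3_invariant_Eop)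

lemma Fop_invariants: "f \<in> invariants d m \<Longrightarrow> Fop d f \<in> invariants d (Suc m)"
  by (simp add: invariants_def Fop_Adeg S3_invariant_Fop)

(* The eigenvalue of H = [E, F] on A(d)_n. *)
definition weight :: "nat \<Rightarrow> nat \<Rightarrow> int" where
  "weight d n = 3 * (int d - 1) - 2 * int n"

lemma sum_sum_diff_eq_diagonal:
  assumes "finite S" "\<And>k l. k \<in> S \<Longrightarrow> l \<in> S \<Longrightarrow> k \<noteq> l \<Longrightarrow> T k l = U k l"
  shows "(\<Sum>k\<in>S. \<Sum>l\<in>S. T k l) - (\<Sum>k\<in>S. \<Sum>l\<in>S. U k l) = (\<Sum>k\<in>S. T k k - U k k :: 'a::ab_group_add)"
proof -
  have "(\<Sum>l\<in>S. T k l) - (\<Sum>l\<in>S. U k l) = T k k - U k k" if "k \<in> S" for k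
  proof -
    have "(\<Sum>l\<in>S - {k}. T k l) = (\<Sum>l\<in>S - {k}. U k l)"
      using assms(2) that by (intro sum.cong) auto
    then show ?thesis
      using assms(1) that by (simp add: sum.remove[of S k])
  qed
  then show ?thesis
    by (simp add: sum_subtractf[symmetric])
qed

lemma Eop_Fop_diagonal_term:
  fixes y :: "'a::ring_1"
  assumes "y \<noteq> 0 \<Longrightarrow> x < d"
  shows "of_nat ((x + 1) * (d - (x + 1))) * (if x + 1 < d then y else 0)
      - (if 0 < x \<and> x < d then of_nat (x * (d - x)) * y else 0) = of_int (int d - 1 - 2 * int x) * y"
proof (cases "y = 0")
  case False
  then obtain m where "d = Suc (x + m)"
    using assms less_iff_Suc_add by blast
  then show ?thesis
    by (cases m; cases x) (simp_all add: algebra_simps)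
qed simp

lemma of_int_weight_eq_sum:
  assumes "e \<in> mons d n"
  shows "of_int (weight d n) = (\<Sum>k<3. of_int (int d - 1 - 2 * int (e k)) :: 'a::ring_1)"
proof -
  have "e 0 + e 1 + e 2 = n"
    using assms by (simp add: mons_def)
  then have "weight d n = (\<Sum>k<3. int d - 1 - 2 * int (e k))"
    by (auto simp: weight_def eval_nat_numeral)
  then show ?thesis
    by simp
qed

lemma Eop_Fop_commutator:
  fixes f :: "(nat \<Rightarrow> nat) \<Rightarrow> 'k::field"
  assumes "f \<in> Adeg d n"
  shows "Eop d (Fop d f) e - Fop d (Eop d f) e = of_int (weight d n) * f e"
proof -
  define T where "T k l = of_nat ((e k + 1) * (d - (e k + 1))) *
    (if 0 < (e(k := e k + 1)) l \<and> (e(k := e k + 1)) l < d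
     then f ((e(k := e k + 1))(l := (e(k := e k + 1)) l - 1)) else 0)" for k l
  define U where "U k l = (if 0 < e l \<and> e l < d
    then of_nat (((e(l := e l - 1)) k + 1) * (d - ((e(l := e l - 1)) k + 1))) *
      f ((e(l := e l - 1))(k := (e(l := e l - 1)) k + 1)) else 0)" for k l
  have EF: "Eop d (Fop d f) e = (\<Sum>k<3. \<Sum>l<3. T k l)"
    by (simp add: Eop_def Fop_def T_def sum_distrib_left)
  have "Fop d (Eop d f) e = (\<Sum>l<3. \<Sum>k<3. U k l)"
    unfolding Fop_def U_def by (intro sum.cong refl) (simp add: Eop_def)
  also have "\<dots> = (\<Sum>k<3. \<Sum>l<3. U k l)"
    by (rule sum.swap)
  finally have FE: "Fop d (Eop d f) e = (\<Sum>k<3. \<Sum>l<3. U k l)" .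
  have off_diag: "T k l = U k l" if "k \<noteq> l" for k l
    using that by (simp add: T_def U_def fun_upd_twist)
  have diag: "T k k - U k k = of_int (int d - 1 - 2 * int (e k)) * f e" if "k < 3" for k
  proof -
    have T_diag: "T k k = of_nat ((e k + 1) * (d - (e k + 1))) * (if e k + 1 < d then f e else 0)"
      by (simp add: T_def)
    have U_diag: "U k k = (if 0 < e k \<and> e k < d then of_nat (e k * (d - e k)) * f e else 0)"
      by (auto simp: U_def)
    have "f e \<noteq> 0 \<Longrightarrow> e k < d"
      using assms that by (auto simp: Adeg_def mons_def)
    then show ?thesis
      unfolding T_diag U_diag by (rule Eop_Fop_diagonal_term)
  qed
  have "Eop d (Fop d f) e - Fop d (Eop d f) e = (\<Sum>k<3. T k k - U k k)"
    unfolding EF FE by (rule sum_sum_diff_eq_diagonal) (auto intro: off_diag)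
  also have "\<dots> = (\<Sum>k<3. of_int (int d - 1 - 2 * int (e k)) * f e)"
    by (intro sum.cong refl diag) simp
  also have "\<dots> = of_int (weight d n) * f e"
  proof (cases "e \<in> mons d n")
    case True
    then show ?thesis
      by (simp add: of_int_weight_eq_sum sum_distrib_right)
  qed (use assms in \<open>simp add: Adeg_def\<close>)
  finally show ?thesis .
qed

(* E maps an eigenvector of FE one degree down and adds the weight, nonnegative below the middle
   degree, to its eigenvalue; in degree 0 FE vanishes. *)
lemma Fop_Eop_no_negative_eigenvalue:
  fixes u :: "(nat \<Rightarrow> nat) \<Rightarrow> 'k::field_char_0"
  assumes "u \<in> Adeg d n" "2 * n \<le> 3 * (d - 1)" "0 < c" "Fop d (Eop d u) = fscale (- of_int c) u"
  shows "u = 0"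
  using assms
proof (induction n arbitrary: u c)
  case 0
  have "Fop d (Eop d u) = 0"
    using Eop_Adeg_0[OF 0(1)] fsp.linear_0[OF linear_Fop] by simp
  with 0(4) have "fscale (- of_int c) u = 0"
    by (rule trans[OF sym])
  then show ?case
    using 0(3) fscale_eq_0_iff[of "- of_int c" u] by simp
next
  case (Suc n)
  define w where "w = Eop d u"
  have w: "w \<in> Adeg d n"
    using Suc.prems(1) by (simp add: w_def Eop_Adeg)
  have EF_w: "Eop d (Fop d w) = fscale (- of_int c) w"
    unfolding w_def Suc.prems(4) by (rule fsp.linear_scale[OF linear_Eop])
  have FE_w: "Fop d (Eop d w) = fscale (- of_int (c + weight d n)) w"
  proof
    fix e
    have "Fop d (Eop d w) e = Eop d (Fop d w) e - of_int (weight d n) * w e"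
      using Eop_Fop_commutator[OF w, of e] by (simp add: algebra_simps)
    then show "Fop d (Eop d w) e = fscale (- of_int (c + weight d n)) w e"
      by (simp add: EF_w fscale_def algebra_simps)
  qed
  have "0 < c + weight d n"
    using Suc.prems(2,3) by (simp add: weight_def)
  then have "w = 0"
    using Suc.IH[OF w _ _ FE_w] Suc.prems(2) by (simp add: zero_fun_def)
  then have "Fop d (Eop d u) = 0"
    using fsp.linear_0[OF linear_Fop] by (simp add: w_def)
  with Suc.prems(4) have "fscale (- of_int c) u = 0"
    by (rule trans[OF sym])
  then show ?case
    using Suc.prems(3) fscale_eq_0_iff[of "- of_int c" u] by simp
qed

lemma Eop_Fop_eq_0_imp_eq_0:
  fixes v :: "(nat \<Rightarrow> nat) \<Rightarrow> 'k::field_char_0"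
  assumes "v \<in> Adeg d m" "2 * m < 3 * (d - 1)" "Eop d (Fop d v) = 0"
  shows "v = 0"
proof (rule Fop_Eop_no_negative_eigenvalue)
  show "Fop d (Eop d v) = fscale (- of_int (weight d m)) v"
  proof
    fix e
    have "Fop d (Eop d v) e = Eop d (Fop d v) e - of_int (weight d m) * v e"
      using Eop_Fop_commutator[OF assms(1), of e] by (simp add: algebra_simps)
    then show "Fop d (Eop d v) e = fscale (- of_int (weight d m)) v e"
      using assms(3) by (simp add: fscale_def)
  qed
  show "0 < weight d m"
    using assms(2) by (simp add: weight_def)
qed (use assms in auto)

lemma inj_on_Eop_Fop_invariants:
  assumes "0 < d" "2 * m < 3 * (d - 1)"
  shows "inj_on (Eop d \<circ> Fop d) (invariants d m :: ((nat \<Rightarrow> nat) \<Rightarrow> 'k::field_char_0) set)"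
proof -
  have subspace: "fsv.subspace (invariants d m :: ((nat \<Rightarrow> nat) \<Rightarrow> 'k) set)"
    using invariants_eq_span_orbsum[OF assms(1)] fsv.subspace_span by metis
  show ?thesis
    unfolding fsp.linear_inj_on_iff_eq_0[OF Vector_Spaces.linear_compose[OF linear_Fop linear_Eop]
        subspace]
    using Eop_Fop_eq_0_imp_eq_0 assms(2) by (auto simp: invariants_def)
qed

lemma p3_le_dim_Eop_image_invariants:
  assumes "0 < d" "2 * m < 3 * (d - 1)"
  shows "p3 (d - 1) m \<le> fsv.dim (Eop d ` invariants d (Suc m) :: ((nat \<Rightarrow> nat) \<Rightarrow> 'k::field_char_0) set)"
proof -
  define M where "M m = (orbsum ` Part3 (d - 1) (int m) :: ((nat \<Rightarrow> nat) \<Rightarrow> 'k) set)" for m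
  have span_M: "invariants d m = fsv.span (M m)" for m
    unfolding M_def by (rule invariants_eq_span_orbsum[OF assms(1)])
  have inj: "inj_on (Eop d \<circ> Fop d) (fsv.span (M m))"
    using inj_on_Eop_Fop_invariants[OF assms, where 'k = 'k] span_M by simp
  have "fsv.independent ((Eop d \<circ> Fop d) ` M m)"
    using fsp.linear_independent_injective_image[OF Vector_Spaces.linear_compose[OF linear_Fop linear_Eop]
        _ inj] independent_orbsum
    unfolding M_def by blast
  moreover have "(Eop d \<circ> Fop d) ` M m \<subseteq> Eop d ` invariants d (Suc m)"
  proof
    fix y assume "y \<in> (Eop d \<circ> Fop d) ` M m"
    then obtain x where "x \<in> M m" "y = Eop d (Fop d x)"
      by auto
    moreover have "Fop d x \<in> invariants d (Suc m)"
      using \<open>x \<in> M m\<close> span_M fsv.span_superset Fop_invariants by blast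
    ultimately show "y \<in> Eop d ` invariants d (Suc m)"
      by blast
  qed
  moreover have "Eop d ` invariants d (Suc m) \<subseteq> fsv.span (Eop d ` M (Suc m))"
    unfolding span_M fsp.linear_span_image[OF linear_Eop] ..
  moreover have "finite (Eop d ` M (Suc m))"
    using finite_Part3 by (simp add: M_def)
  moreover have "card ((Eop d \<circ> Fop d) ` M m) = p3 (d - 1) m"
    using card_image[OF inj_on_subset[OF inj fsv.span_superset]] card_image[OF inj_on_orbsum]
    by (simp add: M_def p3_def)
  ultimately show ?thesis
    using fsv.independent_card_le_dim_of_finite_span by metis
qed

lemma dim_Eop_image_invariants:
  assumes "0 < d" "2 * j \<le> 3 * (d - 1)"
  shows "fsv.dim (Eop d ` invariants d j :: ((nat \<Rightarrow> nat) \<Rightarrow> 'k::field_char_0) set)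
    = p3 (d - 1) (int j - 1)"
proof (cases j)
  case 0
  have "Eop d ` invariants d j \<subseteq> fsv.span ({} :: ((nat \<Rightarrow> nat) \<Rightarrow> 'k) set)"
    using Eop_Adeg_0 by (auto simp: 0 invariants_def)
  then show ?thesis
    using fsv.dim_le_card[of _ "{}"] by (simp add: 0 p3_def Part3_neg)
next
  case (Suc m)
  define V where "V = (Eop d ` invariants d j :: ((nat \<Rightarrow> nat) \<Rightarrow> 'k) set)"
  have "V \<subseteq> invariants d m"
    unfolding V_def Suc using Eop_invariants by blast
  then have "V \<subseteq> fsv.span (orbsum ` Part3 (d - 1) (int m))"
    by (metis invariants_eq_span_orbsum[OF assms(1)])
  then have "fsv.dim V \<le> card (orbsum ` Part3 (d - 1) (int m) :: ((nat \<Rightarrow> nat) \<Rightarrow> 'k) set)"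
    by (rule fsv.dim_le_card) (simp add: finite_Part3)
  also have "\<dots> = p3 (d - 1) m"
    by (simp add: p3_def card_image[OF inj_on_orbsum])
  finally have "fsv.dim V \<le> p3 (d - 1) m" .
  moreover have "p3 (d - 1) m \<le> fsv.dim V"
    using p3_le_dim_Eop_image_invariants[OF assms(1), where 'k = 'k] assms(2) Suc by (simp add: V_def)
  ultimately show ?thesis
    using Suc by (simp add: V_def)
qed

theorem theorem3p1:
  fixes d j :: nat
  assumes "d \<ge> 3" and "j \<le> (3 * (d - 1)) div 2"
  shows "(\<forall>P :: (nat \<Rightarrow> nat) \<Rightarrow> 'k :: {alg_closed_field, field_char_0}.
            P \<in> Adeg d j \<longrightarrow>
            ((Eop d P = (\<lambda>_. 0) \<and> S3_invariant P) \<longleftrightarrow>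
             (Eop d P = (\<lambda>_. 0) \<and> (\<exists>\<alpha> :: nat \<times> nat \<times> nat \<Rightarrow> 'k.
                 P = (\<lambda>e. \<Sum>lam\<in>Part3 (d - 1) (int j). \<alpha> lam * orbsum lam e)))))
         \<and> int (triv TYPE('k) d j) = int (p3 (d - 1) (int j)) - int (p3 (d - 1) (int j - 1))"
proof
  have "0 < d" "2 * j \<le> 3 * (d - 1)"
    using assms by auto
  then show "\<forall>P :: (nat \<Rightarrow> nat) \<Rightarrow> 'k. P \<in> Adeg d j \<longrightarrow>
      ((Eop d P = (\<lambda>_. 0) \<and> S3_invariant P) \<longleftrightarrow>
       (Eop d P = (\<lambda>_. 0) \<and> (\<exists>\<alpha>. P = (\<lambda>e. \<Sum>lam\<in>Part3 (d - 1) (int j). \<alpha> lam * orbsum lam e))))"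
    using S3_invariant_iff_orbsum_combination by blast
  define M where "M = (orbsum ` Part3 (d - 1) (int j) :: ((nat \<Rightarrow> nat) \<Rightarrow> 'k) set)"
  have "triv TYPE('k) d j = fsv.dim {x \<in> fsv.span M. Eop d x = 0}"
    unfolding triv_def M_def invariants_eq_span_orbsum[OF \<open>0 < d\<close>, symmetric]
    by (rule arg_cong[where f = fsv.dim]) (auto simp: invariants_def zero_fun_def)
  moreover have "fsv.dim (fsv.span M) = fsv.dim {x \<in> fsv.span M. Eop d x = 0} + fsv.dim (Eop d ` fsv.span M)"
    using finite_Part3 by (intro fsp.rank_nullity_span[OF linear_Eop]) (simp add: M_def)
  moreover have "fsv.dim (fsv.span M) = p3 (d - 1) (int j)"
    unfolding M_def by (rule dim_span_orbsum)
  moreover have "fsv.dim (Eop d ` fsv.span M) = p3 (d - 1) (int j - 1)"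
    using dim_Eop_image_invariants[OF \<open>0 < d\<close> \<open>2 * j \<le> 3 * (d - 1)\<close>]
    by (simp add: M_def invariants_eq_span_orbsum[OF \<open>0 < d\<close>])
  ultimately show "int (triv TYPE('k) d j) = int (p3 (d - 1) (int j)) - int (p3 (d - 1) (int j - 1))"
    by simp
qed

end
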